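(* Let $\mathcal{G}$ be a dipath space, let $A,B\subseteq V(\mathcal{G})$ and let $k$ be a natural number. Then either there exists a set $X\subseteq V(\mathcal{G})$ with $|X|<k$ meeting every $A$–$B$-path in $\mathcal{G}$, or there exists a set of $k$ pairwise disjoint $A$–$B$-paths in $\mathcal{G}$.
   Context: A subset $Y$ of a linearly ordered set $X$ is called complete (in $X$) if every nonempty $Z \subseteq Y$ has a supremum and an infimum in $X$ and both lie in $Y$. A path is a linearly ordered set $(P,\le_P)$ that is complete in itself. Distinct paths may share elements; intersections and unions of paths refer to their underlying sets; paths are disjoint if their underlying sets are disjoint. A set of paths is compatible if for any two paths $P,Q$ in it, $P\cap Q$ is complete in $P$ (with the order of $P$). For $x \le y$ in a path $P$, the segment of $P$ from $x$ to $y$ is the interval $[x,y]$ of $P$ with the induced order. A path $P$ connects to a path $Q$ if $P \cap Q=\{x\}$ where $x=\max P=\min Q$; in this case the concatenation of $P$ and $Q$ is $P\cup Q$ with the order extending both orders in which every element of $P$ precedes every element of $Q$. A dipath space is a compatible set of paths closed under segments and under concatenations (whenever $P,Q$ are members and $P$ connects to $Q$, their concatenation is a member). $V(\mathcal{G})$ is the union of the underlying sets of the paths of $\mathcal{G}$. An $A$–$B$-path in $\mathcal{G}$ is a path $R\in\mathcal{G}$ with $R\cap A=\{\min R\}$ and $R\cap B=\{\max R\}$. A set meets a path if it intersects its underlying set. *)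

theory Defs
  imports Main
begin

text \<open>A path is represented by its order relation r :: 'a rel (pairs (x,y) meaning x \<le> y);
  its underlying set is Field r.\<close>

definition is_sup :: "'a rel \<Rightarrow> 'a set \<Rightarrow> 'a \<Rightarrow> bool" where
  "is_sup r Z s \<longleftrightarrow> s \<in> Field r \<and> (\<forall>z\<in>Z. (z, s) \<in> r) \<and>
     (\<forall>u\<in>Field r. (\<forall>z\<in>Z. (z, u) \<in> r) \<longrightarrow> (s, u) \<in> r)"

definition is_inf :: "'a rel \<Rightarrow> 'a set \<Rightarrow> 'a \<Rightarrow> bool" where
  "is_inf r Z i \<longleftrightarrow> i \<in> Field r \<and> (\<forall>z\<in>Z. (i, z) \<in> r) \<and>
     (\<forall>u\<in>Field r. (\<forall>z\<in>Z. (u, z) \<in> r) \<longrightarrow> (u, i) \<in> r)"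

definition complete_in :: "'a rel \<Rightarrow> 'a set \<Rightarrow> bool" where
  "complete_in r Y \<longleftrightarrow> Y \<subseteq> Field r \<and>
     (\<forall>Z. Z \<noteq> {} \<and> Z \<subseteq> Y \<longrightarrow>
        (\<exists>s. is_sup r Z s \<and> s \<in> Y) \<and> (\<exists>i. is_inf r Z i \<and> i \<in> Y))"

definition is_path :: "'a rel \<Rightarrow> bool" where
  "is_path r \<longleftrightarrow> linear_order_on (Field r) r \<and> complete_in r (Field r)"

definition compatible :: "'a rel set \<Rightarrow> bool" where
  "compatible G \<longleftrightarrow> (\<forall>P\<in>G. \<forall>Q\<in>G. complete_in P (Field P \<inter> Field Q))"

definition is_max :: "'a rel \<Rightarrow> 'a \<Rightarrow> bool" where
  "is_max r x \<longleftrightarrow> x \<in> Field r \<and> (\<forall>z\<in>Field r. (z, x) \<in> r)"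

definition is_min :: "'a rel \<Rightarrow> 'a \<Rightarrow> bool" where
  "is_min r x \<longleftrightarrow> x \<in> Field r \<and> (\<forall>z\<in>Field r. (x, z) \<in> r)"

definition segment :: "'a rel \<Rightarrow> 'a \<Rightarrow> 'a \<Rightarrow> 'a rel" where
  "segment P x y = (let I = {z \<in> Field P. (x, z) \<in> P \<and> (z, y) \<in> P} in P \<inter> (I \<times> I))"

definition connects :: "'a rel \<Rightarrow> 'a rel \<Rightarrow> bool" where
  "connects P Q \<longleftrightarrow> (\<exists>x. Field P \<inter> Field Q = {x} \<and> is_max P x \<and> is_min Q x)"

definition concat :: "'a rel \<Rightarrow> 'a rel \<Rightarrow> 'a rel" where
  "concat P Q = P \<union> Q \<union> (Field P \<times> Field Q)"

definition dipath_space :: "'a rel set \<Rightarrow> bool" where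
  "dipath_space G \<longleftrightarrow> (\<forall>P\<in>G. is_path P) \<and> compatible G \<and>
     (\<forall>P\<in>G. \<forall>x y. (x, y) \<in> P \<longrightarrow> segment P x y \<in> G) \<and>
     (\<forall>P\<in>G. \<forall>Q\<in>G. connects P Q \<longrightarrow> concat P Q \<in> G)"

definition vertices :: "'a rel set \<Rightarrow> 'a set" where
  "vertices G = \<Union> (Field ` G)"

definition AB_path :: "'a rel set \<Rightarrow> 'a set \<Rightarrow> 'a set \<Rightarrow> 'a rel \<Rightarrow> bool" where
  "AB_path G A B R \<longleftrightarrow> R \<in> G \<and>
     (\<exists>m. is_min R m \<and> Field R \<inter> A = {m}) \<and>
     (\<exists>M. is_max R M \<and> Field R \<inter> B = {M})"

end

theory Submission
  imports Defs
begin

(* Grunwald's augmenting-walk proof of Menger's theorem, with completeness of paths and of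
   their pairwise intersections replacing finiteness.  By induction on k it suffices to turn
   k disjoint A-B-paths into k + 1 of them or into a separator of size at most k.  An
   alternating walk leaves A outside the given paths, runs along bridges that meet the paths only
   in their ends, and may jump backwards along a path.  If some such walk ends in B outside the
   paths, rerouting along a shortest one yields k + 1 disjoint paths.  Otherwise, choosing on each
   path the supremum of the reachable vertices gives k vertices meeting every A-B-path: an A-B-path
   avoiding them could be followed from its last vertex before these suprema to a vertex that is
   reachable but lies beyond a supremum. *)

section \<open>Paths as complete linear orders\<close>

lemma path_refl: "is_path P \<Longrightarrow> x \<in> Field P \<Longrightarrow> (x, x) \<in> P"
  unfolding is_path_def linear_order_on_def partial_order_on_def preorder_on_def
  by (auto dest: refl_onD)

lemma trans_path: "is_path P \<Longrightarrow> trans P"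
  unfolding is_path_def linear_order_on_def partial_order_on_def preorder_on_def by simp

lemma path_trans: "is_path P \<Longrightarrow> (x, y) \<in> P \<Longrightarrow> (y, z) \<in> P \<Longrightarrow> (x, z) \<in> P"
  using trans_path by (blast dest: transD)

lemma path_antisym: "is_path P \<Longrightarrow> (x, y) \<in> P \<Longrightarrow> (y, x) \<in> P \<Longrightarrow> x = y"
  unfolding is_path_def linear_order_on_def partial_order_on_def
  by (auto dest: antisymD)

lemma path_total:
  assumes "is_path P" "x \<in> Field P" "y \<in> Field P"
  shows "(x, y) \<in> P \<or> (y, x) \<in> P"
  using assms unfolding is_path_def linear_order_on_def total_on_def
  by (cases "x = y") (auto intro: path_refl[OF assms(1)])

lemma is_min_unique: "is_path P \<Longrightarrow> is_min P a \<Longrightarrow> is_min P b \<Longrightarrow> a = b"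
  unfolding is_min_def by (blast intro: path_antisym)

lemma is_max_unique: "is_path P \<Longrightarrow> is_max P a \<Longrightarrow> is_max P b \<Longrightarrow> a = b"
  unfolding is_max_def by (blast intro: path_antisym)

definition first_vertex :: "'a rel \<Rightarrow> 'a" where
  "first_vertex P = (THE s. is_min P s)"

definition last_vertex :: "'a rel \<Rightarrow> 'a" where
  "last_vertex P = (THE e. is_max P e)"

lemma first_vertex_eq: "is_path P \<Longrightarrow> is_min P s \<Longrightarrow> first_vertex P = s"
  unfolding first_vertex_def by (blast intro: is_min_unique)

lemma last_vertex_eq: "is_path P \<Longrightarrow> is_max P e \<Longrightarrow> last_vertex P = e"
  unfolding last_vertex_def by (blast intro: is_max_unique)

lemma finite_has_least:
  assumes "trans r" and total: "\<forall>x\<in>S. \<forall>y\<in>S. (x, y) \<in> r \<or> (y, x) \<in> r"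
    and "finite S" "S \<noteq> {}"
  shows "\<exists>m\<in>S. \<forall>y\<in>S. (m, y) \<in> r"
  using assms(3,4) total
proof (induction S rule: finite_ne_induct)
  case (singleton x)
  then show ?case by blast
next
  case (insert x S)
  then obtain m where m: "m \<in> S" "\<forall>y\<in>S. (m, y) \<in> r" by blast
  consider "(x, m) \<in> r" | "(m, x) \<in> r"
    using insert.prems m(1) by blast
  then show ?case
  proof cases
    case 1
    then have "\<forall>y\<in>S. (x, y) \<in> r" using m(2) \<open>trans r\<close> by (blast dest: transD)
    moreover have "(x, x) \<in> r" using insert.prems by blast
    ultimately show ?thesis by blast
  next
    case 2
    then show ?thesis using m by blast
  qed
qed

lemma least_of_finite_Union:
  assumes "trans r" and total: "\<forall>x\<in>(\<Union>i\<in>I. S i). \<forall>y\<in>(\<Union>i\<in>I. S i). (x, y) \<in> r \<or> (y, x) \<in> r"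
    and "finite I" and least: "\<forall>i\<in>I. S i \<noteq> {} \<longrightarrow> (\<exists>m\<in>S i. \<forall>y\<in>S i. (m, y) \<in> r)"
    and "(\<Union>i\<in>I. S i) \<noteq> {}"
  shows "\<exists>m\<in>(\<Union>i\<in>I. S i). \<forall>y\<in>(\<Union>i\<in>I. S i). (m, y) \<in> r"
proof -
  define J where "J = {i \<in> I. S i \<noteq> {}}"
  have "\<forall>i\<in>J. \<exists>m. m \<in> S i \<and> (\<forall>y\<in>S i. (m, y) \<in> r)"
    using least unfolding J_def by blast
  from bchoice[OF this] obtain f where f: "\<forall>i\<in>J. f i \<in> S i \<and> (\<forall>y\<in>S i. (f i, y) \<in> r)"
    by blast
  have "f ` J \<subseteq> (\<Union>i\<in>I. S i)" using f unfolding J_def by blast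
  then have "\<forall>x\<in>f ` J. \<forall>y\<in>f ` J. (x, y) \<in> r \<or> (y, x) \<in> r"
    using total by blast
  moreover have "finite (f ` J)" "f ` J \<noteq> {}"
    using \<open>finite I\<close> assms(5) unfolding J_def by auto
  ultimately obtain m where m: "m \<in> f ` J" "\<forall>y\<in>f ` J. (m, y) \<in> r"
    using finite_has_least[OF \<open>trans r\<close>] by blast
  have "\<forall>y\<in>(\<Union>i\<in>I. S i). (m, y) \<in> r"
  proof
    fix y assume "y \<in> (\<Union>i\<in>I. S i)"
    then obtain i where "i \<in> J" "y \<in> S i" unfolding J_def by blast
    then show "(m, y) \<in> r" using m(2) f \<open>trans r\<close> by (blast dest: transD)
  qed
  with m(1) f show ?thesis unfolding J_def by blast
qed

lemma path_total_on:
  assumes "is_path P" "S \<subseteq> Field P"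
  shows "\<forall>x\<in>S. \<forall>y\<in>S. (x, y) \<in> P \<or> (y, x) \<in> P"
proof (intro ballI)
  fix x y assume "x \<in> S" "y \<in> S"
  then show "(x, y) \<in> P \<or> (y, x) \<in> P" using assms by (intro path_total) auto
qed

lemma path_finite_least:
  "is_path P \<Longrightarrow> finite S \<Longrightarrow> S \<subseteq> Field P \<Longrightarrow> S \<noteq> {} \<Longrightarrow> \<exists>m\<in>S. \<forall>y\<in>S. (m, y) \<in> P"
  by (rule finite_has_least[OF trans_path path_total_on])

lemma path_finite_greatest:
  assumes "is_path P" "finite S" "S \<subseteq> Field P" "S \<noteq> {}"
  shows "\<exists>m\<in>S. \<forall>y\<in>S. (y, m) \<in> P"
proof -
  have "\<forall>x\<in>S. \<forall>y\<in>S. (x, y) \<in> P\<inverse> \<or> (y, x) \<in> P\<inverse>"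
    using path_total_on[OF assms(1,3)] by simp
  moreover have "trans (P\<inverse>)" using trans_path[OF assms(1)] by simp
  ultimately have "\<exists>m\<in>S. \<forall>y\<in>S. (m, y) \<in> P\<inverse>"
    using finite_has_least assms(2,4) by blast
  then show ?thesis by simp
qed

lemma complete_in_least:
  assumes "complete_in r Y" "Y \<noteq> {}"
  shows "\<exists>m\<in>Y. \<forall>y\<in>Y. (m, y) \<in> r"
proof -
  obtain m where "is_inf r Y m" "m \<in> Y"
    using assms(1)[unfolded complete_in_def, THEN conjunct2, rule_format, of Y] assms(2) by blast
  then show ?thesis unfolding is_inf_def by blast
qed

lemma complete_in_greatest:
  assumes "complete_in r Y" "Y \<noteq> {}"
  shows "\<exists>m\<in>Y. \<forall>y\<in>Y. (y, m) \<in> r"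
proof -
  obtain m where "is_sup r Y m" "m \<in> Y"
    using assms(1)[unfolded complete_in_def, THEN conjunct2, rule_format, of Y] assms(2) by blast
  then show ?thesis unfolding is_sup_def by blast
qed

section \<open>Segments and concatenations\<close>

lemma in_segment_iff:
  "(u, v) \<in> segment P x y \<longleftrightarrow> (u, v) \<in> P \<and> (x, u) \<in> P \<and> (u, y) \<in> P \<and> (x, v) \<in> P \<and> (v, y) \<in> P"
  unfolding segment_def Let_def by (auto simp: Field_def)

lemma Field_segment:
  assumes "is_path P"
  shows "Field (segment P x y) = {z. (x, z) \<in> P \<and> (z, y) \<in> P}"
proof (intro set_eqI iffI)
  fix z assume "z \<in> Field (segment P x y)"
  then obtain w where "(z, w) \<in> segment P x y \<or> (w, z) \<in> segment P x y"
    unfolding Field_def by blast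
  then show "z \<in> {z. (x, z) \<in> P \<and> (z, y) \<in> P}" unfolding in_segment_iff by blast
next
  fix z assume z: "z \<in> {z. (x, z) \<in> P \<and> (z, y) \<in> P}"
  then have "(x, z) \<in> P" by blast
  then have "(z, z) \<in> P" by (rule path_refl[OF assms FieldI2])
  then have "(z, z) \<in> segment P x y" unfolding in_segment_iff using z by blast
  then show "z \<in> Field (segment P x y)" by (rule FieldI1)
qed

lemma segment_subset: "segment P x y \<subseteq> P"
  unfolding segment_def Let_def by (rule Int_lower1)

lemma Field_segment_subset: "Field (segment P x y) \<subseteq> Field P"
  using segment_subset by (rule mono_Field)

lemma is_min_segment:
  assumes "is_path P" "(x, y) \<in> P"
  shows "is_min (segment P x y) x"
  using path_refl[OF assms(1) FieldI1[OF assms(2)]] assms(2)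
  unfolding is_min_def Field_segment[OF assms(1)] by (auto simp: in_segment_iff)

lemma is_max_segment:
  assumes "is_path P" "(x, y) \<in> P"
  shows "is_max (segment P x y) y"
  using path_refl[OF assms(1) FieldI2[OF assms(2)]] assms(2)
  unfolding is_max_def Field_segment[OF assms(1)] by (auto simp: in_segment_iff)

lemma subset_concat1: "P \<subseteq> concat P Q"
  unfolding concat_def by blast

lemma subset_concat2: "Q \<subseteq> concat P Q"
  unfolding concat_def by blast

lemma Field_concat_subset: "Field (concat P Q) \<subseteq> Field P \<union> Field Q"
  unfolding concat_def Field_Un by (auto simp: Field_def)

lemma Field_concat: "x \<in> Field P \<Longrightarrow> x \<in> Field Q \<Longrightarrow> Field (concat P Q) = Field P \<union> Field Q"
  using Field_concat_subset[of P Q] mono_Field[OF subset_concat1, of P Q] mono_Field[OF subset_concat2, of Q P]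
  by blast

lemma is_min_concat:
  assumes "is_min P a" "x \<in> Field P" "x \<in> Field Q"
  shows "is_min (concat P Q) a"
  unfolding is_min_def Field_concat[OF assms(2,3)]
proof (intro conjI ballI)
  have "a \<in> Field P" using assms(1) unfolding is_min_def by blast
  then show "a \<in> Field P \<union> Field Q" by blast
  fix z assume "z \<in> Field P \<union> Field Q"
  then show "(a, z) \<in> concat P Q"
    using assms(1) \<open>a \<in> Field P\<close> unfolding is_min_def concat_def by blast
qed

lemma is_max_concat:
  assumes "is_max Q b" "x \<in> Field P" "x \<in> Field Q"
  shows "is_max (concat P Q) b"
  unfolding is_max_def Field_concat[OF assms(2,3)]
proof (intro conjI ballI)
  have "b \<in> Field Q" using assms(1) unfolding is_max_def by blast
  then show "b \<in> Field P \<union> Field Q" by blast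
  fix z assume "z \<in> Field P \<union> Field Q"
  then show "(z, b) \<in> concat P Q"
    using assms(1) \<open>b \<in> Field Q\<close> unfolding is_max_def concat_def by blast
qed

section \<open>Dipath spaces\<close>

locale dipath_space_context =
  fixes G :: "'a rel set"
  assumes dipath_space: "dipath_space G"
begin

lemma path_of_dipath_space: "P \<in> G \<Longrightarrow> is_path P"
  using dipath_space unfolding dipath_space_def by blast

lemma segment_in: "P \<in> G \<Longrightarrow> (x, y) \<in> P \<Longrightarrow> segment P x y \<in> G"
  using dipath_space unfolding dipath_space_def by blast

lemma concat_in:
  assumes "P \<in> G" "Q \<in> G" "Field P \<inter> Field Q = {x}" "is_max P x" "is_min Q x"
  shows "concat P Q \<in> G"
  using dipath_space assms unfolding dipath_space_def connects_def by blast

lemma complete_common_vertices: "P \<in> G \<Longrightarrow> Q \<in> G \<Longrightarrow> complete_in P (Field P \<inter> Field Q)"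
  using dipath_space unfolding dipath_space_def compatible_def by blast

lemma first_common_vertex:
  assumes "R \<in> G" "finite Ps" "Ps \<subseteq> G" "Field R \<inter> \<Union>(Field ` Ps) \<noteq> {}"
  shows "\<exists>y\<in>Field R \<inter> \<Union>(Field ` Ps). \<forall>u\<in>Field R \<inter> \<Union>(Field ` Ps). (y, u) \<in> R"
proof -
  have eq: "Field R \<inter> \<Union>(Field ` Ps) = (\<Union>P\<in>Ps. Field R \<inter> Field P)" by blast
  have R: "is_path R" by (rule path_of_dipath_space[OF assms(1)])
  have total: "\<forall>x\<in>(\<Union>P\<in>Ps. Field R \<inter> Field P). \<forall>y\<in>(\<Union>P\<in>Ps. Field R \<inter> Field P). (x, y) \<in> R \<or> (y, x) \<in> R"
    by (rule path_total_on[OF R]) blast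
  have "\<forall>P\<in>Ps. Field R \<inter> Field P \<noteq> {} \<longrightarrow> (\<exists>m\<in>Field R \<inter> Field P. \<forall>y\<in>Field R \<inter> Field P. (m, y) \<in> R)"
  proof (intro ballI impI)
    fix P assume "P \<in> Ps" "Field R \<inter> Field P \<noteq> {}"
    with assms(3) show "\<exists>m\<in>Field R \<inter> Field P. \<forall>y\<in>Field R \<inter> Field P. (m, y) \<in> R"
      by (intro complete_in_least complete_common_vertices[OF assms(1)]) auto
  qed
  from least_of_finite_Union[OF trans_path[OF R] total assms(2) this] show ?thesis
    unfolding eq using assms(4) unfolding eq .
qed

lemma last_common_vertex:
  assumes "R \<in> G" "finite Ps" "Ps \<subseteq> G" "Field R \<inter> \<Union>(Field ` Ps) \<noteq> {}"
  shows "\<exists>y\<in>Field R \<inter> \<Union>(Field ` Ps). \<forall>u\<in>Field R \<inter> \<Union>(Field ` Ps). (u, y) \<in> R"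
proof -
  have eq: "Field R \<inter> \<Union>(Field ` Ps) = (\<Union>P\<in>Ps. Field R \<inter> Field P)" by blast
  have R: "is_path R" by (rule path_of_dipath_space[OF assms(1)])
  have trans: "trans (R\<inverse>)" using trans_path[OF R] by simp
  have total: "\<forall>x\<in>(\<Union>P\<in>Ps. Field R \<inter> Field P). \<forall>y\<in>(\<Union>P\<in>Ps. Field R \<inter> Field P). (x, y) \<in> R\<inverse> \<or> (y, x) \<in> R\<inverse>"
    using path_total_on[OF R, of "\<Union>P\<in>Ps. Field R \<inter> Field P"] by blast
  have "\<forall>P\<in>Ps. Field R \<inter> Field P \<noteq> {} \<longrightarrow> (\<exists>m\<in>Field R \<inter> Field P. \<forall>y\<in>Field R \<inter> Field P. (m, y) \<in> R\<inverse>)"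
  proof (intro ballI impI)
    fix P assume "P \<in> Ps" "Field R \<inter> Field P \<noteq> {}"
    with assms(3) have "\<exists>m\<in>Field R \<inter> Field P. \<forall>y\<in>Field R \<inter> Field P. (y, m) \<in> R"
      by (intro complete_in_greatest complete_common_vertices[OF assms(1)]) auto
    then show "\<exists>m\<in>Field R \<inter> Field P. \<forall>y\<in>Field R \<inter> Field P. (m, y) \<in> R\<inverse>" by simp
  qed
  from least_of_finite_Union[OF trans total assms(2) this] show ?thesis
    unfolding eq using assms(4) unfolding eq by simp
qed

lemma splice:
  assumes P: "P \<in> G" and Q: "Q \<in> G" and uq: "(u, q) \<in> P" and qv: "(q, v) \<in> Q"
    and q_first: "\<forall>y\<in>Field P \<inter> Field Q. (q, y) \<in> P"
  defines "S \<equiv> concat (segment P u q) (segment Q q v)"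
  shows "S \<in> G" "is_min S u" "is_max S v"
    and "Field S = {y. (u, y) \<in> P \<and> (y, q) \<in> P} \<union> {y. (q, y) \<in> Q \<and> (y, v) \<in> Q}"
proof -
  have pP: "is_path P" by (rule path_of_dipath_space[OF P])
  have pQ: "is_path Q" by (rule path_of_dipath_space[OF Q])
  have FS1: "Field (segment P u q) = {y. (u, y) \<in> P \<and> (y, q) \<in> P}" by (rule Field_segment[OF pP])
  have FS2: "Field (segment Q q v) = {y. (q, y) \<in> Q \<and> (y, v) \<in> Q}" by (rule Field_segment[OF pQ])
  have max1: "is_max (segment P u q) q" by (rule is_max_segment[OF pP uq])
  have min2: "is_min (segment Q q v) q" by (rule is_min_segment[OF pQ qv])
  have q1: "q \<in> Field (segment P u q)" and q2: "q \<in> Field (segment Q q v)"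
    using max1 min2 unfolding is_max_def is_min_def by blast+
  have "Field (segment P u q) \<inter> Field (segment Q q v) = {q}"
  proof
    show "Field (segment P u q) \<inter> Field (segment Q q v) \<subseteq> {q}"
    proof
      fix y assume y: "y \<in> Field (segment P u q) \<inter> Field (segment Q q v)"
      then have "(y, q) \<in> P" using FS1 by blast
      moreover have "(q, y) \<in> P"
        using y q_first Field_segment_subset[of P u q] Field_segment_subset[of Q q v] by blast
      ultimately show "y \<in> {q}" using path_antisym[OF pP] by blast
    qed
  qed (use q1 q2 in blast)
  then show "S \<in> G"
    unfolding S_def using concat_in[OF segment_in[OF P uq] segment_in[OF Q qv] _ max1 min2] by blast
  show "is_min S u" unfolding S_def by (rule is_min_concat[OF is_min_segment[OF pP uq] q1 q2])
  show "is_max S v" unfolding S_def by (rule is_max_concat[OF is_max_segment[OF pQ qv] q1 q2])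
  show "Field S = {y. (u, y) \<in> P \<and> (y, q) \<in> P} \<union> {y. (q, y) \<in> Q \<and> (y, v) \<in> Q}"
    unfolding S_def Field_concat[OF q1 q2] FS1 FS2 ..
qed

end

locale menger_setting = dipath_space_context G for G :: "'a rel set" +
  fixes A B :: "'a set"
begin

section \<open>Routes and linkages\<close>

text \<open>Unlike an A-B-path, a route may meet A and B several times, but only finitely often.
  This is preserved by rerouting along bridges, and it lets every route be trimmed to an
  A-B-path.\<close>

definition route :: "'a rel \<Rightarrow> bool" where
  "route P \<longleftrightarrow> P \<in> G \<and> (\<exists>s e. is_min P s \<and> s \<in> A \<and> is_max P e \<and> e \<in> B) \<and>
     finite (Field P \<inter> A) \<and> finite (Field P \<inter> B)"

definition linkage :: "'a rel set \<Rightarrow> bool" where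
  "linkage PP \<longleftrightarrow> finite PP \<and> (\<forall>P\<in>PP. route P) \<and>
     (\<forall>P\<in>PP. \<forall>Q\<in>PP. P \<noteq> Q \<longrightarrow> Field P \<inter> Field Q = {})"

lemma AB_pathD:
  assumes "AB_path G A B R"
  shows "R \<in> G" "is_path R" "is_min R (first_vertex R)" "Field R \<inter> A = {first_vertex R}"
    "is_max R (last_vertex R)" "Field R \<inter> B = {last_vertex R}"
proof -
  obtain s e where "R \<in> G" "is_min R s" "Field R \<inter> A = {s}" "is_max R e" "Field R \<inter> B = {e}"
    using assms unfolding AB_path_def by blast
  moreover have "is_path R" using \<open>R \<in> G\<close> by (rule path_of_dipath_space)
  ultimately show "R \<in> G" "is_path R" "is_min R (first_vertex R)" "Field R \<inter> A = {first_vertex R}"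
    "is_max R (last_vertex R)" "Field R \<inter> B = {last_vertex R}"
    by (simp_all add: first_vertex_eq last_vertex_eq)
qed

lemma AB_path_route: "AB_path G A B R \<Longrightarrow> route R"
  unfolding AB_path_def route_def by force

lemma route_contains_AB_path:
  assumes "route P"
  shows "\<exists>R. AB_path G A B R \<and> Field R \<subseteq> Field P"
proof -
  obtain s e where PG: "P \<in> G" and s: "is_min P s" "s \<in> A" and e: "is_max P e" "e \<in> B"
    and fA: "finite (Field P \<inter> A)" and fB: "finite (Field P \<inter> B)"
    using assms unfolding route_def by blast
  have pP: "is_path P" using PG by (rule path_of_dipath_space)
  have "s \<in> Field P \<inter> A" using s unfolding is_min_def by blast
  then obtain a where a: "a \<in> Field P \<inter> A" and a_last: "\<forall>y\<in>Field P \<inter> A. (y, a) \<in> P"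
    using path_finite_greatest[OF pP fA] by blast
  define B' where "B' = {u \<in> Field P \<inter> B. (a, u) \<in> P}"
  have "finite B'" unfolding B'_def using fB by (rule rev_finite_subset) blast
  moreover have "e \<in> B'" unfolding B'_def using a e unfolding is_max_def by blast
  ultimately obtain b where b: "b \<in> B'" and b_first: "\<forall>y\<in>B'. (b, y) \<in> P"
    using path_finite_least[OF pP] unfolding B'_def by blast
  have ab: "(a, b) \<in> P" using b unfolding B'_def by blast
  define R where "R = segment P a b"
  have FR: "Field R = {z. (a, z) \<in> P \<and> (z, b) \<in> P}"
    unfolding R_def by (rule Field_segment[OF pP])
  have "Field R \<inter> A = {a}"
  proof
    show "Field R \<inter> A \<subseteq> {a}"
      using a_last FR path_antisym[OF pP] by (blast intro: FieldI2)
    show "{a} \<subseteq> Field R \<inter> A" using is_min_segment[OF pP ab] a unfolding R_def is_min_def by blast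
  qed
  moreover have "Field R \<inter> B = {b}"
  proof
    show "Field R \<inter> B \<subseteq> {b}"
      using b_first FR path_antisym[OF pP] unfolding B'_def by (blast intro: FieldI2)
    show "{b} \<subseteq> Field R \<inter> B" using is_max_segment[OF pP ab] b unfolding R_def is_max_def B'_def by blast
  qed
  ultimately have "AB_path G A B R"
    unfolding AB_path_def R_def using segment_in[OF PG ab] is_min_segment[OF pP ab] is_max_segment[OF pP ab]
    by blast
  moreover have "Field R \<subseteq> Field P" unfolding R_def by (rule Field_segment_subset)
  ultimately show ?thesis by blast
qed

lemma linkage_AB_paths:
  assumes "linkage PP"
  shows "\<exists>RR. RR \<subseteq> G \<and> finite RR \<and> card RR = card PP \<and> (\<forall>R\<in>RR. AB_path G A B R) \<and>
            (\<forall>P\<in>RR. \<forall>Q\<in>RR. P \<noteq> Q \<longrightarrow> Field P \<inter> Field Q = {})"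
proof -
  have fin: "finite PP" and routes: "\<forall>P\<in>PP. route P"
    and dis: "\<forall>P\<in>PP. \<forall>Q\<in>PP. P \<noteq> Q \<longrightarrow> Field P \<inter> Field Q = {}"
    using assms unfolding linkage_def by blast+
  define f where "f P = (SOME R. AB_path G A B R \<and> Field R \<subseteq> Field P)" for P
  have f: "AB_path G A B (f P) \<and> Field (f P) \<subseteq> Field P" if "P \<in> PP" for P
    unfolding f_def by (rule someI_ex, rule route_contains_AB_path) (use routes that in blast)
  have nonempty: "Field (f P) \<noteq> {}" if "P \<in> PP" for P
    using AB_pathD(3)[of "f P"] f[OF that] unfolding is_min_def by blast
  have disjoint_images: "Field (f P) \<inter> Field (f Q) = {}" if "P \<in> PP" "Q \<in> PP" "P \<noteq> Q" for P Q
    using dis f that by blast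
  then have "inj_on f PP" using nonempty by (metis inj_onI Int_absorb)
  show ?thesis
  proof (intro exI conjI)
    show "f ` PP \<subseteq> G" using f AB_pathD(1) by blast
    show "finite (f ` PP)" using fin by simp
    show "card (f ` PP) = card PP" by (rule card_image) fact
    show "\<forall>R\<in>f ` PP. AB_path G A B R" using f by blast
    show "\<forall>P\<in>f ` PP. \<forall>Q\<in>f ` PP. P \<noteq> Q \<longrightarrow> Field P \<inter> Field Q = {}"
      using disjoint_images by blast
  qed
qed

section \<open>Alternating walks\<close>

definition bridge :: "'a set \<Rightarrow> 'a rel \<Rightarrow> 'a \<Rightarrow> 'a \<Rightarrow> bool" where
  "bridge V F u v \<longleftrightarrow> F \<in> G \<and> is_min F u \<and> is_max F v \<and> Field F \<inter> V \<subseteq> {u, v} \<and>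
     finite (Field F \<inter> A) \<and> finite (Field F \<inter> B)"

definition alt_walk :: "'a rel set \<Rightarrow> nat \<Rightarrow> (nat \<Rightarrow> 'a rel) \<Rightarrow> (nat \<Rightarrow> 'a rel) \<Rightarrow>
    (nat \<Rightarrow> 'a) \<Rightarrow> (nat \<Rightarrow> 'a) \<Rightarrow> bool" where
  "alt_walk PP m F Q z w \<longleftrightarrow> w 0 \<in> A \<and> w 0 \<notin> vertices PP \<and>
     (\<forall>i\<le>m. bridge (vertices PP) (F i) (w i) (z (Suc i))) \<and>
     (\<forall>i. 0 < i \<and> i \<le> m \<longrightarrow> Q i \<in> PP \<and> (w i, z i) \<in> Q i \<and> w i \<noteq> z i)"

definition aug_walk :: "'a rel set \<Rightarrow> nat \<Rightarrow> (nat \<Rightarrow> 'a rel) \<Rightarrow> (nat \<Rightarrow> 'a rel) \<Rightarrow>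
    (nat \<Rightarrow> 'a) \<Rightarrow> (nat \<Rightarrow> 'a) \<Rightarrow> bool" where
  "aug_walk PP m F Q z w \<longleftrightarrow> alt_walk PP m F Q z w \<and> z (Suc m) \<in> B \<and> z (Suc m) \<notin> vertices PP"

definition shortest_aug_walk :: "'a rel set \<Rightarrow> nat \<Rightarrow> (nat \<Rightarrow> 'a rel) \<Rightarrow> (nat \<Rightarrow> 'a rel) \<Rightarrow>
    (nat \<Rightarrow> 'a) \<Rightarrow> (nat \<Rightarrow> 'a) \<Rightarrow> bool" where
  "shortest_aug_walk PP m F Q z w \<longleftrightarrow> aug_walk PP m F Q z w \<and>
     (\<forall>m'<m. \<forall>F' Q' z' w'. \<not> aug_walk PP m' F' Q' z' w')"

definition reachable :: "'a rel set \<Rightarrow> 'a \<Rightarrow> bool" where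
  "reachable PP v \<longleftrightarrow> (\<exists>m F Q z w. alt_walk PP m F Q z w \<and> z (Suc m) = v)"

lemma Field_subset_vertices: "P \<in> PP \<Longrightarrow> Field P \<subseteq> vertices PP"
  unfolding vertices_def by blast

lemma bridge_in: "bridge V F u v \<Longrightarrow> F \<in> G"
  and bridge_min: "bridge V F u v \<Longrightarrow> is_min F u"
  and bridge_max: "bridge V F u v \<Longrightarrow> is_max F v"
  and bridge_vertices: "bridge V F u v \<Longrightarrow> Field F \<inter> V \<subseteq> {u, v}"
  and bridge_finite: "bridge V F u v \<Longrightarrow> finite (Field F \<inter> A) \<and> finite (Field F \<inter> B)"
  unfolding bridge_def by blast+

lemma alt_walk_start: "alt_walk PP m F Q z w \<Longrightarrow> w 0 \<in> A \<and> w 0 \<notin> vertices PP"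
  and alt_walk_bridge: "alt_walk PP m F Q z w \<Longrightarrow> i \<le> m \<Longrightarrow> bridge (vertices PP) (F i) (w i) (z (Suc i))"
  and alt_walk_back:
    "alt_walk PP m F Q z w \<Longrightarrow> 0 < i \<Longrightarrow> i \<le> m \<Longrightarrow> Q i \<in> PP \<and> (w i, z i) \<in> Q i \<and> w i \<noteq> z i"
  unfolding alt_walk_def by blast+

lemma alt_walk_vertex: "alt_walk PP m F Q z w \<Longrightarrow> 0 < i \<Longrightarrow> i \<le> m \<Longrightarrow> z i \<in> vertices PP"
  using alt_walk_back Field_subset_vertices by (blast intro: FieldI2)

lemma bridge_splice:
  assumes F1: "bridge V F1 u1 v1" and F2: "bridge V F2 u2 v2"
    and q: "q \<in> Field F1 \<inter> Field F2" and q_first: "\<forall>y\<in>Field F1 \<inter> Field F2. (q, y) \<in> F1"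
    and "q \<noteq> v1"
  shows "bridge V (concat (segment F1 u1 q) (segment F2 q v2)) u1 v2"
proof -
  have p1: "is_path F1" by (rule path_of_dipath_space[OF bridge_in[OF F1]])
  have p2: "is_path F2" by (rule path_of_dipath_space[OF bridge_in[OF F2]])
  have uq: "(u1, q) \<in> F1" using bridge_min[OF F1] q unfolding is_min_def by blast
  have qv: "(q, v2) \<in> F2" using bridge_max[OF F2] q unfolding is_max_def by blast
  note S = splice[OF bridge_in[OF F1] bridge_in[OF F2] uq qv q_first]
  have "u \<in> {u1, v2}" if "u \<in> V" "(u1, u) \<in> F1" "(u, q) \<in> F1" for u
  proof -
    have "(q, v1) \<in> F1" using bridge_max[OF F1] q unfolding is_max_def by blast
    then have "u \<noteq> v1" using path_antisym[OF p1 that(3)] \<open>q \<noteq> v1\<close> by blast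
    then show ?thesis using that bridge_vertices[OF F1] FieldI1[OF that(3)] by blast
  qed
  moreover have "u \<in> {u1, v2}" if "u \<in> V" "(q, u) \<in> F2" "(u, v2) \<in> F2" for u
  proof -
    have "u \<in> {u2, v2}" using that bridge_vertices[OF F2] FieldI1[OF that(3)] by blast
    moreover have "u = u1" if "u = u2"
    proof -
      have "(u, q) \<in> F2" using bridge_min[OF F2] q \<open>u = u2\<close> unfolding is_min_def by blast
      then have "q = u" using path_antisym[OF p2] \<open>(q, u) \<in> F2\<close> by blast
      then show "u = u1" using q \<open>u \<in> V\<close> bridge_vertices[OF F1] \<open>q \<noteq> v1\<close> by blast
    qed
    ultimately show ?thesis by blast
  qed
  moreover have "Field (concat (segment F1 u1 q) (segment F2 q v2)) \<subseteq> Field F1 \<union> Field F2"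
    unfolding S(4) by (blast intro: FieldI1)
  ultimately show ?thesis
    unfolding bridge_def using S(1-4) bridge_finite[OF F1] bridge_finite[OF F2]
    by (blast intro: rev_finite_subset)
qed

lemma aug_walk_shortcut_bridge:
  assumes W: "aug_walk PP m F Q z w" and "i < m"
    and F': "bridge (vertices PP) F' (w i) (z (Suc m))"
  shows "aug_walk PP i (F(i := F')) Q (z(Suc i := z (Suc m))) w"
proof -
  have pw: "alt_walk PP m F Q z w" using W unfolding aug_walk_def by blast
  have "\<forall>j\<le>i. bridge (vertices PP) ((F(i := F')) j) (w j) ((z(Suc i := z (Suc m))) (Suc j))"
    using alt_walk_bridge[OF pw] F' \<open>i < m\<close> by simp
  moreover have "\<forall>j. 0 < j \<and> j \<le> i \<longrightarrow>
      Q j \<in> PP \<and> (w j, (z(Suc i := z (Suc m))) j) \<in> Q j \<and> w j \<noteq> (z(Suc i := z (Suc m))) j"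
    using alt_walk_back[OF pw] \<open>i < m\<close> by simp
  ultimately show ?thesis
    using alt_walk_start[OF pw] W unfolding aug_walk_def alt_walk_def by simp
qed

lemma aug_walk_shortcut_back:
  assumes W: "aug_walk PP m F Q z w" and "0 < i" "i < m"
    and jump: "(w m, z i) \<in> Q i" "w m \<noteq> z i"
  shows "aug_walk PP i (F(i := F m)) Q (z(Suc i := z (Suc m))) (w(i := w m))"
proof -
  have pw: "alt_walk PP m F Q z w" using W unfolding aug_walk_def by blast
  have "\<forall>j\<le>i. bridge (vertices PP) ((F(i := F m)) j) ((w(i := w m)) j) ((z(Suc i := z (Suc m))) (Suc j))"
    using alt_walk_bridge[OF pw] \<open>i < m\<close> by simp
  moreover have "\<forall>j. 0 < j \<and> j \<le> i \<longrightarrow> Q j \<in> PP \<and>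
      ((w(i := w m)) j, (z(Suc i := z (Suc m))) j) \<in> Q j \<and> (w(i := w m)) j \<noteq> (z(Suc i := z (Suc m))) j"
    using alt_walk_back[OF pw] \<open>i < m\<close> jump by simp
  ultimately show ?thesis
    using alt_walk_start[OF pw] W \<open>0 < i\<close> unfolding aug_walk_def alt_walk_def by simp
qed

text \<open>If F i met F m elsewhere, splicing them at their first common vertex would shortcut the walk.\<close>

lemma shortest_aug_walk_bridges_meet:
  assumes W: "shortest_aug_walk PP m F Q z w" and "i < m"
    and p: "p \<in> Field (F i) \<inter> Field (F m)"
  shows "p = z (Suc i) \<and> z (Suc i) = w m"
proof -
  have aw: "aug_walk PP m F Q z w" and pw: "alt_walk PP m F Q z w"
    using W unfolding shortest_aug_walk_def aug_walk_def by blast+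
  have Fi: "bridge (vertices PP) (F i) (w i) (z (Suc i))" and Fm: "bridge (vertices PP) (F m) (w m) (z (Suc m))"
    using alt_walk_bridge[OF pw] \<open>i < m\<close> by simp_all
  have pi: "is_path (F i)" using bridge_in[OF Fi] by (rule path_of_dipath_space)
  obtain q where q: "q \<in> Field (F i) \<inter> Field (F m)" and q_first: "\<forall>y\<in>Field (F i) \<inter> Field (F m). (q, y) \<in> F i"
    using first_common_vertex[OF bridge_in[OF Fi], of "{F m}"] bridge_in[OF Fm] p by auto
  have qz: "q = z (Suc i)"
  proof (rule ccontr)
    assume "q \<noteq> z (Suc i)"
    from bridge_splice[OF Fi Fm q q_first this]
    have "aug_walk PP i (F(i := concat (segment (F i) (w i) q) (segment (F m) q (z (Suc m))))) Q
        (z(Suc i := z (Suc m))) w"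
      by (rule aug_walk_shortcut_bridge[OF aw \<open>i < m\<close>])
    then show False using W \<open>i < m\<close> unfolding shortest_aug_walk_def by blast
  qed
  have "(q, p) \<in> F i" using q_first p by blast
  moreover have "(p, z (Suc i)) \<in> F i" using bridge_max[OF Fi] p unfolding is_max_def by blast
  ultimately have "p = z (Suc i)" using path_antisym[OF pi] qz by blast
  moreover have "q \<in> {w m, z (Suc m)}"
    using bridge_vertices[OF Fm] q qz alt_walk_vertex[OF pw, of "Suc i"] \<open>i < m\<close> by auto
  then have "q = w m"
    using aw qz alt_walk_vertex[OF pw, of "Suc i"] \<open>i < m\<close> unfolding aug_walk_def by auto
  ultimately show ?thesis using qz by simp
qed

text \<open>Otherwise jumping from w m directly back to z i would shortcut the walk.\<close>

lemma shortest_aug_walk_back_order: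
  assumes W: "shortest_aug_walk PP m F Q z w" and L: "linkage PP"
    and "0 < i" "i < m" "Q i = Q m"
  shows "(z i, w m) \<in> Q m"
proof (rule ccontr)
  assume not_before: "(z i, w m) \<notin> Q m"
  have aw: "aug_walk PP m F Q z w" and pw: "alt_walk PP m F Q z w"
    using W unfolding shortest_aug_walk_def aug_walk_def by blast+
  have back_m: "Q m \<in> PP" "(w m, z m) \<in> Q m" and back_i: "(w i, z i) \<in> Q i"
    using alt_walk_back[OF pw] \<open>0 < i\<close> \<open>i < m\<close> by simp_all
  have "is_path (Q m)"
    using L back_m(1) path_of_dipath_space unfolding linkage_def route_def by blast
  moreover have "z i \<in> Field (Q m)" "w m \<in> Field (Q m)"
    using back_i back_m(2) \<open>Q i = Q m\<close> by (auto intro: FieldI1 FieldI2)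
  ultimately have "(w m, z i) \<in> Q m" "w m \<noteq> z i"
    using not_before path_total path_refl by metis+
  then have "aug_walk PP i (F(i := F m)) Q (z(Suc i := z (Suc m))) (w(i := w m))"
    using aug_walk_shortcut_back[OF aw \<open>0 < i\<close> \<open>i < m\<close>] \<open>Q i = Q m\<close> by simp
  then show False using W \<open>i < m\<close> unfolding shortest_aug_walk_def by blast
qed

section \<open>Augmenting a linkage\<close>

definition reroute :: "'a rel set \<Rightarrow> 'a rel \<Rightarrow> 'a \<Rightarrow> 'a rel \<Rightarrow> 'a rel set" where
  "reroute PP P x F = insert (concat (segment P (first_vertex P) x) F) (PP - {P})"

context
  fixes PP P x F b
  assumes L: "linkage PP" and P: "P \<in> PP" and x: "x \<in> Field P"
    and F: "bridge (vertices PP) F x b" and b: "b \<in> B" "b \<notin> vertices PP"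
begin

private lemma route_P: "route P"
  using L P unfolding linkage_def by blast

private lemma P_in_G: "P \<in> G"
  using route_P unfolding route_def by blast

private lemma path_P: "is_path P"
  using P_in_G by (rule path_of_dipath_space)

private lemma first_P: "is_min P (first_vertex P)" "first_vertex P \<in> A"
  using route_P first_vertex_eq[OF path_P] unfolding route_def by auto

private lemma first_before_x: "(first_vertex P, x) \<in> P"
  using first_P(1) x unfolding is_min_def by blast

private lemma P_F_meet: "Field P \<inter> Field F \<subseteq> {x}"
  using bridge_vertices[OF F] b(2) Field_subset_vertices[OF P] by blast

lemma rerouted_path:
  defines "P' \<equiv> concat (segment P (first_vertex P) x) F"
  shows "route P'" and "Field P' = {u. (first_vertex P, u) \<in> P \<and> (u, x) \<in> P} \<union> Field F"
proof -
  let ?S = "segment P (first_vertex P) x"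
  have S_max: "is_max ?S x" by (rule is_max_segment[OF path_P first_before_x])
  have xS: "x \<in> Field ?S" and xF: "x \<in> Field F"
    using S_max bridge_min[OF F] unfolding is_max_def is_min_def by blast+
  have F_P': "Field P' = Field ?S \<union> Field F" unfolding P'_def by (rule Field_concat[OF xS xF])
  then show "Field P' = {u. (first_vertex P, u) \<in> P \<and> (u, x) \<in> P} \<union> Field F"
    by (simp add: Field_segment[OF path_P])
  have "Field ?S \<inter> Field F = {x}"
    using P_F_meet Field_segment_subset[of P "first_vertex P" x] xS xF by blast
  then have "P' \<in> G"
    unfolding P'_def by (rule concat_in[OF segment_in[OF P_in_G first_before_x] bridge_in[OF F] _ S_max bridge_min[OF F]])
  moreover have "is_min P' (first_vertex P)" "is_max P' b" unfolding P'_def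
    by (rule is_min_concat[OF is_min_segment[OF path_P first_before_x] xS xF],
        rule is_max_concat[OF bridge_max[OF F] xS xF])
  moreover have "finite (Field P' \<inter> A)" "finite (Field P' \<inter> B)"
    using route_P bridge_finite[OF F] F_P' Field_segment_subset[of P "first_vertex P" x]
    unfolding route_def by (blast intro: rev_finite_subset)+
  ultimately show "route P'"
    unfolding route_def using first_P(2) b(1) by blast
qed

lemma reroute_linkage: "linkage (reroute PP P x F)" "card (reroute PP P x F) = card PP"
proof -
  define P' where "P' = concat (segment P (first_vertex P) x) F"
  have dis: "\<forall>P\<in>PP. \<forall>Q\<in>PP. P \<noteq> Q \<longrightarrow> Field P \<inter> Field Q = {}" and fin: "finite PP"
    using L unfolding linkage_def by blast+
  have P'_disjoint: "Field P' \<inter> Field Q = {}" if "Q \<in> PP - {P}" for Q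
  proof -
    have "Field P \<inter> Field Q = {}" using dis P that by blast
    moreover have "Field F \<inter> Field Q \<subseteq> {x}"
      using bridge_vertices[OF F] b(2) Field_subset_vertices[of Q PP] that by blast
    ultimately show ?thesis
      using rerouted_path(2) x unfolding P'_def by (blast intro: FieldI2)
  qed
  moreover have "Field P' \<noteq> {}"
    using rerouted_path(2) bridge_min[OF F] unfolding P'_def is_min_def by blast
  ultimately have "P' \<notin> PP - {P}" by blast
  then have "card (reroute PP P x F) = Suc (card (PP - {P}))"
    unfolding reroute_def P'_def[symmetric] using fin by simp
  also have "\<dots> = card PP" by (rule card_Suc_Diff1[OF fin P])
  finally show "card (reroute PP P x F) = card PP" .
  show "linkage (reroute PP P x F)"
    using fin L rerouted_path(1) P'_disjoint dis
    unfolding linkage_def reroute_def P'_def[symmetric] by (auto simp: P'_def)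
qed

lemma vertices_reroute: "vertices (reroute PP P x F) \<subseteq> vertices PP \<union> Field F"
  using rerouted_path(2) Field_subset_vertices[OF P]
  unfolding reroute_def vertices_def by (blast intro: FieldI2)

lemma reroute_avoids_after:
  assumes "(x, u) \<in> P" "u \<noteq> x"
  shows "u \<notin> vertices (reroute PP P x F)"
proof
  assume "u \<in> vertices (reroute PP P x F)"
  then obtain R where R: "R \<in> reroute PP P x F" "u \<in> Field R" unfolding vertices_def by blast
  have dis: "Field P \<inter> Field Q = {}" if "Q \<in> PP - {P}" for Q
    using L P that unfolding linkage_def by blast
  have "u \<in> Field P" using assms(1) by (rule FieldI2)
  then show False
    using R dis rerouted_path(2) P_F_meet assms path_antisym[OF path_P]
    unfolding reroute_def by blast
qed

lemma reroute_keeps_before: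
  assumes "(u, v) \<in> P" "(v, x) \<in> P"
  shows "(u, v) \<in> concat (segment P (first_vertex P) x) F"
proof -
  have "u \<in> Field P" "v \<in> Field P" using assms(1) by (rule FieldI1, rule FieldI2)
  then have "(first_vertex P, u) \<in> P" "(first_vertex P, v) \<in> P"
    using first_P(1) unfolding is_min_def by blast+
  moreover have "(u, x) \<in> P" using path_trans[OF path_P assms] .
  ultimately have "(u, v) \<in> segment P (first_vertex P) x"
    using assms unfolding in_segment_iff by blast
  then show ?thesis using subset_concat1 by blast
qed

end

context
  fixes PP k F Q z w
  assumes L: "linkage PP" and W: "shortest_aug_walk PP (Suc k) F Q z w"
begin

private abbreviation (input) "m \<equiv> Suc k"

private abbreviation (input) "PP2 \<equiv> reroute PP (Q m) (w m) (F m)"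

private abbreviation (input) "P2 \<equiv> concat (segment (Q m) (first_vertex (Q m)) (w m)) (F m)"

private abbreviation (input) "e \<equiv> last_vertex (Q m)"

private lemma pw: "alt_walk PP m F Q z w"
  using W unfolding shortest_aug_walk_def aug_walk_def by blast

private lemma end_outside: "z (Suc m) \<in> B" "z (Suc m) \<notin> vertices PP"
  using W unfolding shortest_aug_walk_def aug_walk_def by blast+

private lemma last_jump: "Q m \<in> PP" "(w m, z m) \<in> Q m" "w m \<noteq> z m"
  using alt_walk_back[OF pw, of m] by simp_all

private lemma route_Qm: "route (Q m)"
  using L last_jump(1) unfolding linkage_def by blast

private lemma path_Qm: "is_path (Q m)"
  using route_Qm path_of_dipath_space unfolding route_def by blast

private lemma last_Qm: "is_max (Q m) e" "e \<in> B"
  using route_Qm last_vertex_eq[OF path_Qm] unfolding route_def by auto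

private lemma zm_before_last: "(z m, e) \<in> Q m"
  using last_Qm(1) FieldI2[OF last_jump(2)] unfolding is_max_def by blast

private lemma last_bridge: "bridge (vertices PP) (F m) (w m) (z (Suc m))"
  using alt_walk_bridge[OF pw] by simp

private lemma wm_Qm: "w m \<in> Field (Q m)"
  using last_jump(2) by (rule FieldI1)

private lemmas PP2_linkage = reroute_linkage[OF L last_jump(1) wm_Qm last_bridge end_outside]

private lemmas PP2_vertices = vertices_reroute[OF L last_jump(1) wm_Qm last_bridge end_outside]

private lemmas P2_keeps_before = reroute_keeps_before[OF L last_jump(1) wm_Qm last_bridge end_outside]

private lemma bridges_avoid_last: "Field (F j) \<inter> Field (F m) \<subseteq> {z (Suc j)}" if "j < m"
  using shortest_aug_walk_bridges_meet[OF W that] by blast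

private lemma prev_bridge_avoids_last: "Field (F k) \<inter> Field (F m) = {}"
  using shortest_aug_walk_bridges_meet[OF W, of k] last_jump(3) by auto

private lemma prev_start_not_after: "(z m, w k) \<notin> Q m"
proof
  assume after: "(z m, w k) \<in> Q m"
  then have wk: "w k \<in> Field (Q m)" by (rule FieldI2)
  show False
  proof (cases "k = 0")
    case True
    then show False
      using alt_walk_start[OF pw] wk Field_subset_vertices[OF last_jump(1)] by auto
  next
    case False
    then have jump_k: "Q k \<in> PP" "(w k, z k) \<in> Q k"
      using alt_walk_back[OF pw, of k] by simp_all
    have "Q k = Q m"
      using L jump_k last_jump(1) wk unfolding linkage_def by (blast intro: FieldI1)
    then have "(w k, w m) \<in> Q m"
      using path_trans[OF path_Qm] jump_k(2) shortest_aug_walk_back_order[OF W L] False by blast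
    then have "(z m, w m) \<in> Q m" using path_trans[OF path_Qm after] by blast
    then show False using path_antisym[OF path_Qm last_jump(2)] last_jump(3) by blast
  qed
qed

private lemma after_last_jump_outside:
  assumes "(z m, u) \<in> Q m"
  shows "u \<notin> vertices PP2"
proof -
  have "(w m, u) \<in> Q m" using path_trans[OF path_Qm last_jump(2) assms] .
  moreover have "u \<noteq> w m" using path_antisym[OF path_Qm last_jump(2)] last_jump(3) assms by blast
  ultimately show ?thesis
    by (rule reroute_avoids_after[OF L last_jump(1) wm_Qm last_bridge end_outside])
qed

lemma shortest_aug_walk_tail_bridge:
  "bridge (vertices PP2) (concat (F k) (segment (Q m) (z m) e)) (w k) e"
proof -
  let ?S = "segment (Q m) (z m) e"
  have Fk: "bridge (vertices PP) (F k) (w k) (z m)"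
    using alt_walk_bridge[OF pw, of k] by simp
  have FS: "Field ?S = {u. (z m, u) \<in> Q m \<and> (u, e) \<in> Q m}" by (rule Field_segment[OF path_Qm])
  have S_sub: "Field ?S \<subseteq> Field (Q m)" by (rule Field_segment_subset)
  have S_min: "is_min ?S (z m)" by (rule is_min_segment[OF path_Qm zm_before_last])
  have zS: "z m \<in> Field ?S" and zFk: "z m \<in> Field (F k)"
    using S_min bridge_max[OF Fk] unfolding is_min_def is_max_def by blast+
  have S_outside: "Field ?S \<inter> vertices PP2 = {}"
    using after_last_jump_outside FS by blast
  have F_concat: "Field (concat (F k) ?S) = Field (F k) \<union> Field ?S" by (rule Field_concat[OF zFk zS])
  have "Field (F k) \<inter> Field ?S = {z m}"
  proof -
    have "Field (F k) \<inter> Field ?S \<subseteq> {w k, z m}"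
      using bridge_vertices[OF Fk] S_sub Field_subset_vertices[OF last_jump(1)] by blast
    moreover have "w k \<notin> Field ?S" using prev_start_not_after FS by blast
    ultimately show ?thesis using zS zFk by blast
  qed
  then have "concat (F k) ?S \<in> G"
    using concat_in[OF bridge_in[OF Fk] segment_in[OF _ zm_before_last] _ bridge_max[OF Fk] S_min]
      route_Qm unfolding route_def by blast
  moreover have "Field (concat (F k) ?S) \<inter> vertices PP2 \<subseteq> {w k, e}"
  proof
    fix u assume u: "u \<in> Field (concat (F k) ?S) \<inter> vertices PP2"
    then have "u \<in> Field (F k)" using F_concat S_outside by blast
    moreover have "u \<in> vertices PP" using u prev_bridge_avoids_last \<open>u \<in> Field (F k)\<close> PP2_vertices by blast
    ultimately have "u \<in> {w k, z m}" using bridge_vertices[OF Fk] by blast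
    then show "u \<in> {w k, e}" using u zS S_outside by blast
  qed
  moreover have "finite (Field (concat (F k) ?S) \<inter> A)" "finite (Field (concat (F k) ?S) \<inter> B)"
    using bridge_finite[OF Fk] route_Qm F_concat S_sub unfolding route_def by (blast intro: rev_finite_subset)+
  ultimately show ?thesis
    unfolding bridge_def using is_min_concat[OF bridge_min[OF Fk] zFk zS]
      is_max_concat[OF is_max_segment[OF path_Qm zm_before_last] zFk zS] by blast
qed

private lemma start_after_reroute: "w 0 \<in> A \<and> w 0 \<notin> vertices PP2"
proof -
  have "w 0 \<in> Field (F 0)"
    using bridge_min[OF alt_walk_bridge[OF pw, of 0]] unfolding is_min_def by simp
  moreover have "z (Suc 0) \<in> vertices PP" using alt_walk_vertex[OF pw, of 1] by simp
  ultimately have "w 0 \<notin> Field (F m)"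
    using bridges_avoid_last[of 0] alt_walk_start[OF pw] by auto
  then show ?thesis using alt_walk_start[OF pw] PP2_vertices by blast
qed

private lemma bridge_after_reroute:
  assumes "j < k"
  shows "bridge (vertices PP2) (F j) (w j) (z (Suc j))"
proof -
  have Fj: "bridge (vertices PP) (F j) (w j) (z (Suc j))" using alt_walk_bridge[OF pw, of j] assms by simp
  have "Field (F j) \<inter> vertices PP2 \<subseteq> {w j, z (Suc j)}"
    using PP2_vertices bridge_vertices[OF Fj] bridges_avoid_last[of j] assms by fastforce
  then show ?thesis using Fj unfolding bridge_def by blast
qed

private lemma jump_after_reroute:
  assumes "0 < j" "j \<le> k"
  defines "Q2 \<equiv> if Q j = Q m then P2 else Q j"
  shows "Q2 \<in> PP2 \<and> (w j, z j) \<in> Q2 \<and> w j \<noteq> z j"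
proof -
  have jump: "Q j \<in> PP" "(w j, z j) \<in> Q j" "w j \<noteq> z j"
    using alt_walk_back[OF pw, of j] assms(1,2) by simp_all
  show ?thesis
  proof (cases "Q j = Q m")
    case True
    then have "(z j, w m) \<in> Q m"
      using shortest_aug_walk_back_order[OF W L, of j] assms(1,2) by simp
    then have "(w j, z j) \<in> P2" using P2_keeps_before jump(2) True by simp
    then show ?thesis using True jump unfolding Q2_def reroute_def by simp
  next
    case False
    then show ?thesis using jump unfolding Q2_def reroute_def by simp
  qed
qed

text \<open>Q m is rerouted along the last bridge F m.  The new walk drops F m and the last jump: its
  final bridge is F k followed by the rest of Q m after z m, and jumps along Q m now use the
  rerouted path.\<close>

lemma shortest_aug_walk_reduce:
  "\<exists>PP' F' Q' z'. linkage PP' \<and> card PP' = card PP \<and> aug_walk PP' k F' Q' z' w"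
proof -
  define F' where "F' = F(k := concat (F k) (segment (Q m) (z m) e))"
  define Q' where "Q' j = (if Q j = Q m then P2 else Q j)" for j
  define z' where "z' = z(m := e)"
  have "\<forall>j\<le>k. bridge (vertices PP2) (F' j) (w j) (z' (Suc j))"
    using bridge_after_reroute shortest_aug_walk_tail_bridge
    unfolding F'_def z'_def by (auto simp: nat_less_le)
  moreover have "\<forall>j. 0 < j \<and> j \<le> k \<longrightarrow> Q' j \<in> PP2 \<and> (w j, z' j) \<in> Q' j \<and> w j \<noteq> z' j"
    using jump_after_reroute unfolding Q'_def z'_def by simp
  moreover have "z' (Suc k) \<in> B \<and> z' (Suc k) \<notin> vertices PP2"
    using last_Qm(2) after_last_jump_outside[OF zm_before_last] unfolding z'_def by simp
  ultimately have "aug_walk PP2 k F' Q' z' w"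
    using start_after_reroute unfolding aug_walk_def alt_walk_def by blast
  then show ?thesis using PP2_linkage by blast
qed

end

lemma aug_walk_base:
  assumes L: "linkage PP" and W: "aug_walk PP 0 F Q z w"
  shows "linkage (insert (F 0) PP)" "card (insert (F 0) PP) = Suc (card PP)"
proof -
  have F0: "bridge (vertices PP) (F 0) (w 0) (z (Suc 0))"
    using W alt_walk_bridge unfolding aug_walk_def by blast
  have ends: "w 0 \<in> A" "w 0 \<notin> vertices PP" "z (Suc 0) \<in> B" "z (Suc 0) \<notin> vertices PP"
    using W alt_walk_start unfolding aug_walk_def by blast+
  then have outside: "Field (F 0) \<inter> vertices PP = {}" using bridge_vertices[OF F0] by blast
  have "route (F 0)"
    using F0 ends unfolding bridge_def route_def by blast
  moreover have disjoint: "Field (F 0) \<inter> Field P = {}" if "P \<in> PP" for P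
    using outside Field_subset_vertices[OF that] by blast
  moreover have "F 0 \<notin> PP"
    using disjoint bridge_min[OF F0] unfolding is_min_def by blast
  ultimately show "linkage (insert (F 0) PP)" "card (insert (F 0) PP) = Suc (card PP)"
    using L unfolding linkage_def by auto
qed

lemma aug_walk_augments:
  "linkage PP \<Longrightarrow> aug_walk PP m F Q z w \<Longrightarrow> \<exists>PP'. linkage PP' \<and> card PP' = Suc (card PP)"
proof (induction m arbitrary: PP F Q z w rule: less_induct)
  case (less m)
  show ?case
  proof (cases "shortest_aug_walk PP m F Q z w")
    case False
    then obtain m' F' Q' z' w' where "m' < m" "aug_walk PP m' F' Q' z' w'"
      using less.prems unfolding shortest_aug_walk_def by blast
    then show ?thesis using less.IH less.prems(1) by blast
  next
    case shortest: True
    show ?thesis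
    proof (cases m)
      case 0
      then show ?thesis using aug_walk_base less.prems by blast
    next
      case (Suc k)
      then obtain PP2 F2 Q2 z2 where "linkage PP2" "card PP2 = card PP" "aug_walk PP2 k F2 Q2 z2 w"
        using shortest_aug_walk_reduce[OF less.prems(1)] shortest by blast
      with less.IH[of k] Suc show ?thesis by (metis lessI)
    qed
  qed
qed

section \<open>A separator from the ends of alternating walks\<close>

lemma reachable_start:
  assumes "a \<in> A" "a \<notin> vertices PP" "bridge (vertices PP) F a v"
  shows "reachable PP v"
proof -
  have "alt_walk PP 0 (\<lambda>_. F) Q (\<lambda>_. v) (\<lambda>_. a)" for Q
    using assms unfolding alt_walk_def by simp
  then show ?thesis unfolding reachable_def by blast
qed

lemma reachable_step:
  assumes "reachable PP e" "P \<in> PP" "(t, e) \<in> P" "t \<noteq> e" "bridge (vertices PP) F t v"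
  shows "reachable PP v"
proof -
  obtain m Fs Q z w where W: "alt_walk PP m Fs Q z w" and e: "z (Suc m) = e"
    using assms(1) unfolding reachable_def by blast
  have "alt_walk PP (Suc m) (Fs(Suc m := F)) (Q(Suc m := P)) (z(Suc (Suc m) := v)) (w(Suc m := t))"
    using W assms(2-5) e unfolding alt_walk_def by (simp add: le_Suc_eq)
  then show ?thesis unfolding reachable_def by fastforce
qed

lemma segment_bridge:
  assumes "R \<in> G" "(u, v) \<in> R" "finite (Field R \<inter> A)" "finite (Field R \<inter> B)"
    and only_ends: "\<And>y. y \<in> V \<Longrightarrow> (u, y) \<in> R \<Longrightarrow> (y, v) \<in> R \<Longrightarrow> y = u \<or> y = v"
  shows "bridge V (segment R u v) u v"
proof -
  have R: "is_path R" using assms(1) by (rule path_of_dipath_space)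
  have "Field (segment R u v) \<subseteq> Field R" by (rule Field_segment_subset)
  then show ?thesis
    unfolding bridge_def using segment_in[OF assms(1,2)] is_min_segment[OF R assms(2)]
      is_max_segment[OF R assms(2)] assms(3,4) only_ends Field_segment[OF R]
    by (blast intro: rev_finite_subset)
qed

text \<open>Follow R from t to its first vertex in one of the paths Ds, or to its end if there is none.\<close>

lemma AB_path_exit_bridge:
  assumes R: "AB_path G A B R" and t: "t \<in> Field R" "t \<notin> B"
    and Ds: "finite Ds" "Ds \<subseteq> G"
    and covered: "\<And>u. u \<in> V \<Longrightarrow> (t, u) \<in> R \<Longrightarrow> u \<noteq> t \<Longrightarrow> u \<in> \<Union>(Field ` Ds)"
  shows "\<exists>v. (t, v) \<in> R \<and> bridge V (segment R t v) t v \<and> (v \<in> B \<and> v \<notin> V \<or> v \<in> \<Union>(Field ` Ds))"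
proof -
  define E where "E = last_vertex R"
  note R_props = AB_pathD[OF R, folded E_def]
  have finite: "finite (Field R \<inter> A)" "finite (Field R \<inter> B)" using R_props(4,6) by simp_all
  have tE: "(t, E) \<in> R" using R_props(5) t(1) unfolding is_max_def by blast
  define Rt where "Rt = segment R t E"
  have F_Rt: "Field Rt = {u. (t, u) \<in> R \<and> (u, E) \<in> R}"
    unfolding Rt_def by (rule Field_segment[OF R_props(2)])
  show ?thesis
  proof (cases "Field Rt \<inter> \<Union>(Field ` Ds) = {}")
    case True
    then have only_t: "u = t" if "u \<in> V" "(t, u) \<in> R" "(u, E) \<in> R" for u
      using that covered F_Rt by blast
    have "E \<in> B" "E \<noteq> t" using R_props(6) t(2) by blast+
    then have "E \<notin> V" using only_t tE path_refl[OF R_props(2) FieldI2[OF tE]] by blast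
    moreover have "bridge V (segment R t E) t E"
      using segment_bridge[OF R_props(1) tE finite] only_t by blast
    ultimately show ?thesis using tE \<open>E \<in> B\<close> by blast
  next
    case False
    have Rt_G: "Rt \<in> G" unfolding Rt_def by (rule segment_in[OF R_props(1) tE])
    from first_common_vertex[OF Rt_G Ds False] obtain v
      where v: "v \<in> Field Rt \<inter> \<Union>(Field ` Ds)"
        and v_first: "\<forall>u\<in>Field Rt \<inter> \<Union>(Field ` Ds). (v, u) \<in> Rt"
      by blast
    have tv: "(t, v) \<in> R" using v F_Rt by blast
    have "bridge V (segment R t v) t v"
    proof (rule segment_bridge[OF R_props(1) tv finite])
      fix u assume u: "u \<in> V" "(t, u) \<in> R" "(u, v) \<in> R"
      show "u = t \<or> u = v"
      proof (cases "u = t")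
        case False
        have "(u, E) \<in> R" using path_trans[OF R_props(2) u(3)] v F_Rt by blast
        then have "u \<in> Field Rt \<inter> \<Union>(Field ` Ds)" using F_Rt u covered[OF u(1,2) False] by blast
        then have "(v, u) \<in> R" using v_first segment_subset[of R t E] unfolding Rt_def by blast
        then show ?thesis using path_antisym[OF R_props(2) u(3)] by blast
      qed blast
    qed
    then show ?thesis using tv v by blast
  qed
qed

text \<open>On an A-B-path P the only vertex in A is the first one, so this is the supremum of the
  reachable vertices of P, or the first vertex of P if none of them is reachable.\<close>

definition sep_vertex :: "'a rel set \<Rightarrow> 'a rel \<Rightarrow> 'a" where
  "sep_vertex PP P = (SOME x. is_sup P {u \<in> Field P. u \<in> A \<or> reachable PP u} x)"

context
  fixes PP :: "'a rel set" and P :: "'a rel"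
  assumes P: "AB_path G A B P"
begin

lemma sep_vertex_is_sup: "is_sup P {u \<in> Field P. u \<in> A \<or> reachable PP u} (sep_vertex PP P)"
proof -
  have "complete_in P (Field P)" using AB_pathD(2)[OF P] unfolding is_path_def by blast
  moreover have "first_vertex P \<in> {u \<in> Field P. u \<in> A \<or> reachable PP u}"
    using AB_pathD(4)[OF P] by blast
  ultimately have "\<exists>x. is_sup P {u \<in> Field P. u \<in> A \<or> reachable PP u} x"
    using complete_in_def[THEN iffD1, THEN conjunct2, rule_format, of P "Field P" "{u \<in> Field P. u \<in> A \<or> reachable PP u}"]
    by blast
  then show ?thesis unfolding sep_vertex_def by (rule someI_ex)
qed

lemma sep_vertex_in: "sep_vertex PP P \<in> Field P"
  using sep_vertex_is_sup unfolding is_sup_def by blast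

lemma reachable_before_sep: "u \<in> Field P \<Longrightarrow> reachable PP u \<Longrightarrow> (u, sep_vertex PP P) \<in> P"
  using sep_vertex_is_sup unfolding is_sup_def by blast

lemma before_sep_reachable:
  assumes t: "t \<in> Field P" "(t, sep_vertex PP P) \<in> P" "t \<noteq> sep_vertex PP P"
  shows "\<exists>e\<in>Field P. reachable PP e \<and> (t, e) \<in> P \<and> t \<noteq> e"
proof (rule ccontr)
  assume none: "\<not> ?thesis"
  have "(u, t) \<in> P" if "u \<in> Field P" "u \<in> A \<or> reachable PP u" for u
    using that(2)
  proof
    assume "u \<in> A"
    then have "u = first_vertex P" using AB_pathD(4)[OF P] that(1) by blast
    then show ?thesis using AB_pathD(3)[OF P] t(1) unfolding is_min_def by blast
  next
    assume "reachable PP u"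
    then show ?thesis
      using none that(1) t(1) path_total[OF AB_pathD(2)[OF P]] path_refl[OF AB_pathD(2)[OF P]] by metis
  qed
  then have "(sep_vertex PP P, t) \<in> P" using sep_vertex_is_sup t(1) unfolding is_sup_def by blast
  then show False using path_antisym[OF AB_pathD(2)[OF P] t(2)] t(3) by blast
qed

end

context
  fixes PP :: "'a rel set"
  assumes fin: "finite PP" and AB: "\<forall>P\<in>PP. AB_path G A B P"
    and disjoint: "\<forall>P\<in>PP. \<forall>Q\<in>PP. P \<noteq> Q \<longrightarrow> Field P \<inter> Field Q = {}"
    and no_aug: "\<forall>v. reachable PP v \<and> v \<in> B \<longrightarrow> v \<in> vertices PP"
begin

private lemma PP_G: "PP \<subseteq> G"
  using AB AB_pathD(1) by blast

private lemma path_PP: "P \<in> PP \<Longrightarrow> is_path P"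
  using AB AB_pathD(2) by blast

private lemma first_before_sep: "P \<in> PP \<Longrightarrow> (first_vertex P, sep_vertex PP P) \<in> P"
  using AB AB_pathD(3) sep_vertex_in unfolding is_min_def by blast

private lemma sep_before_last: "P \<in> PP \<Longrightarrow> (sep_vertex PP P, last_vertex P) \<in> P"
  using AB AB_pathD(5) sep_vertex_in unfolding is_max_def by blast

lemma AB_path_meets_before_sep:
  assumes R: "AB_path G A B R"
  shows "\<exists>P\<in>PP. \<exists>u\<in>Field R \<inter> Field P. (u, sep_vertex PP P) \<in> P"
proof -
  define r where "r = first_vertex R"
  note R_props = AB_pathD[OF R, folded r_def]
  have rR: "r \<in> Field R" and rA: "r \<in> A" using R_props(3,4) unfolding is_min_def by blast+
  have finite: "finite (Field R \<inter> A)" "finite (Field R \<inter> B)" using R_props(4,6) by simp_all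
  show ?thesis
  proof (cases "r \<in> vertices PP")
    case True
    then obtain P where P: "P \<in> PP" "r \<in> Field P" unfolding vertices_def by blast
    then have "r = first_vertex P" using AB_pathD(4) AB rA by blast
    then show ?thesis using first_before_sep P rR by blast
  next
    case r_off: False
    have "Field R \<inter> vertices PP \<noteq> {}"
    proof
      assume off: "Field R \<inter> vertices PP = {}"
      then have "bridge (vertices PP) R r (last_vertex R)"
        using R_props finite unfolding bridge_def by blast
      then have "reachable PP (last_vertex R)" by (rule reachable_start[OF rA r_off])
      moreover have "last_vertex R \<in> Field R \<inter> B" using R_props(6) by blast
      ultimately show False using no_aug off by blast
    qed
    then obtain y where y: "y \<in> Field R \<inter> vertices PP"
      and y_first: "\<forall>u\<in>Field R \<inter> vertices PP. (y, u) \<in> R"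
      using first_common_vertex[OF R_props(1) fin PP_G] unfolding vertices_def by blast
    have ry: "(r, y) \<in> R" using R_props(3) y unfolding is_min_def by blast
    have "bridge (vertices PP) (segment R r y) r y"
    proof (rule segment_bridge[OF R_props(1) ry finite])
      fix u assume "u \<in> vertices PP" "(r, u) \<in> R" "(u, y) \<in> R"
      then show "u = r \<or> u = y"
        using y_first path_antisym[OF R_props(2)] by (blast intro: FieldI2)
    qed
    then have "reachable PP y" by (rule reachable_start[OF rA r_off])
    moreover obtain P where "P \<in> PP" "y \<in> Field P" using y unfolding vertices_def by blast
    ultimately show ?thesis using reachable_before_sep AB y by blast
  qed
qed

lemma sep_vertex_after:
  assumes R: "AB_path G A B R" and P0: "P0 \<in> PP"
    and t: "t \<in> Field R" "t \<in> Field P0" "(t, sep_vertex PP P0) \<in> P0" "t \<noteq> sep_vertex PP P0"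
    and after_sep: "\<And>P u. P \<in> PP \<Longrightarrow> u \<in> Field P \<Longrightarrow> (t, u) \<in> R \<Longrightarrow> u \<noteq> t \<Longrightarrow> (sep_vertex PP P, u) \<in> P"
  shows "\<exists>P\<in>PP. sep_vertex PP P \<in> Field R"
proof -
  define x where "x = sep_vertex PP"
  define D where "D P = segment P (x P) (last_vertex P)" for P
  have F_D: "Field (D P) = {u. (x P, u) \<in> P \<and> (u, last_vertex P) \<in> P}" if "P \<in> PP" for P
    unfolding D_def by (rule Field_segment[OF path_PP[OF that]])
  have "D P \<in> G" if "P \<in> PP" for P
    unfolding D_def x_def by (rule segment_in[OF subsetD[OF PP_G that] sep_before_last[OF that]])
  then have D_PP: "finite (D ` PP)" "D ` PP \<subseteq> G" using fin by auto
  have t_B: "t \<notin> B"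
  proof
    assume "t \<in> B"
    then have "t = last_vertex P0" using AB_pathD(6) AB P0 t(2) by blast
    then show False
      using sep_before_last[OF P0] path_antisym[OF path_PP[OF P0] t(3)] t(4) unfolding x_def by simp
  qed
  have covered: "u \<in> \<Union>(Field ` D ` PP)" if u: "u \<in> vertices PP" "(t, u) \<in> R" "u \<noteq> t" for u
  proof -
    obtain P where P: "P \<in> PP" "u \<in> Field P" using u(1) unfolding vertices_def by blast
    then have "(u, last_vertex P) \<in> P"
      using AB_pathD(5)[OF bspec[OF AB P(1)]] unfolding is_max_def by blast
    moreover have "(x P, u) \<in> P" unfolding x_def by (rule after_sep[OF P u(2,3)])
    ultimately have "u \<in> Field (D P)" using F_D[OF P(1)] by blast
    then show ?thesis using P(1) by blast
  qed
  from AB_path_exit_bridge[where V = "vertices PP", OF R t(1) t_B D_PP covered] obtain v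
    where v: "(t, v) \<in> R" "bridge (vertices PP) (segment R t v) t v"
      and v_cases: "v \<in> B \<and> v \<notin> vertices PP \<or> v \<in> \<Union>(Field ` D ` PP)"
    by blast
  obtain e where "reachable PP e" "(t, e) \<in> P0" "t \<noteq> e"
    using before_sep_reachable[OF bspec[OF AB P0] t(2-4)] by blast
  then have "reachable PP v" using reachable_step[OF _ P0 _ _ v(2)] by blast
  with v_cases no_aug obtain P where P: "P \<in> PP" "v \<in> Field (D P)" by blast
  then have "v \<in> Field P" "(x P, v) \<in> P"
    using F_D Field_segment_subset[of P "x P" "last_vertex P"] unfolding D_def by blast+
  then have "v = x P"
    using reachable_before_sep[OF bspec[OF AB P(1)] _ \<open>reachable PP v\<close>]
      path_antisym[OF path_PP[OF P(1)]] unfolding x_def by blast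
  then show ?thesis using P(1) FieldI2[OF v(1)] unfolding x_def by blast
qed

lemma sep_vertices_meet_AB_path:
  assumes R: "AB_path G A B R"
  shows "sep_vertex PP ` PP \<inter> Field R \<noteq> {}"
proof
  assume avoid: "sep_vertex PP ` PP \<inter> Field R = {}"
  define x where "x = sep_vertex PP"
  define C where "C P = segment P (first_vertex P) (x P)" for P
  have F_C: "Field (C P) = {u. (first_vertex P, u) \<in> P \<and> (u, x P) \<in> P}" if "P \<in> PP" for P
    unfolding C_def by (rule Field_segment[OF path_PP[OF that]])
  have in_C: "u \<in> Field (C P)" if "P \<in> PP" "u \<in> Field P" "(u, x P) \<in> P" for P u
    using F_C AB_pathD(3) AB that unfolding is_min_def by blast
  have "C P \<in> G" if "P \<in> PP" for P
    unfolding C_def x_def by (rule segment_in[OF subsetD[OF PP_G that] first_before_sep[OF that]])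
  then have C_PP: "finite (C ` PP)" "C ` PP \<subseteq> G" using fin by auto
  have "Field R \<inter> \<Union>(Field ` C ` PP) \<noteq> {}"
    using AB_path_meets_before_sep[OF R] in_C unfolding x_def by blast
  from last_common_vertex[OF AB_pathD(1)[OF R] C_PP this] obtain t
    where t: "t \<in> Field R \<inter> \<Union>(Field ` C ` PP)"
      and t_last: "\<forall>u\<in>Field R \<inter> \<Union>(Field ` C ` PP). (u, t) \<in> R"
    by blast
  then obtain P0 where P0: "P0 \<in> PP" "t \<in> Field P0" "(t, x P0) \<in> P0"
    using F_C by (blast intro: FieldI2)
  have "t \<noteq> x P0" using avoid t P0(1) unfolding x_def by blast
  have "(x P, u) \<in> P" if "P \<in> PP" "u \<in> Field P" "(t, u) \<in> R" "u \<noteq> t" for P u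
  proof (rule ccontr)
    assume "(x P, u) \<notin> P"
    then have "(u, x P) \<in> P"
      using path_total[OF AB_pathD(2)] sep_vertex_in AB that(1,2) unfolding x_def by blast
    then have "(u, t) \<in> R" using t_last in_C that by (blast intro: FieldI2)
    then show False using path_antisym[OF AB_pathD(2)[OF R] that(3)] that(4) by blast
  qed
  then obtain P where "P \<in> PP" "x P \<in> Field R"
    using sep_vertex_after[OF R P0(1) _ P0(2)] P0(3) \<open>t \<noteq> x P0\<close> t unfolding x_def by blast
  then show False using avoid unfolding x_def by blast
qed

end

lemma more_paths_or_separator:
  assumes fin: "finite PP" and "card PP = k" and AB: "\<forall>P\<in>PP. AB_path G A B P"
    and disjoint: "\<forall>P\<in>PP. \<forall>Q\<in>PP. P \<noteq> Q \<longrightarrow> Field P \<inter> Field Q = {}"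
  shows "(\<exists>X. X \<subseteq> vertices G \<and> finite X \<and> card X < Suc k \<and>
            (\<forall>R. AB_path G A B R \<longrightarrow> X \<inter> Field R \<noteq> {}))
       \<or> (\<exists>PP'. PP' \<subseteq> G \<and> finite PP' \<and> card PP' = Suc k \<and> (\<forall>R\<in>PP'. AB_path G A B R) \<and>
            (\<forall>P\<in>PP'. \<forall>Q\<in>PP'. P \<noteq> Q \<longrightarrow> Field P \<inter> Field Q = {}))"
proof (cases "\<forall>v. reachable PP v \<and> v \<in> B \<longrightarrow> v \<in> vertices PP")
  case True
  have "sep_vertex PP ` PP \<subseteq> vertices G"
    using sep_vertex_in AB AB_pathD(1) Field_subset_vertices by blast
  moreover have "card (sep_vertex PP ` PP) < Suc k"
    using card_image_le[OF fin, of "sep_vertex PP"] \<open>card PP = k\<close> by simp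
  ultimately show ?thesis
    using sep_vertices_meet_AB_path[OF fin AB disjoint True] fin by blast
next
  case False
  then obtain m F Q z w where "aug_walk PP m F Q z w"
    unfolding reachable_def aug_walk_def by blast
  moreover have "linkage PP" using fin AB disjoint AB_path_route unfolding linkage_def by blast
  ultimately obtain PP' where "linkage PP'" "card PP' = Suc k"
    using aug_walk_augments \<open>card PP = k\<close> by blast
  then show ?thesis using linkage_AB_paths by metis
qed

end

theorem mainTheorem8:
  fixes G :: "'a rel set" and A B :: "'a set" and k :: nat
  assumes "dipath_space G" and "A \<subseteq> vertices G" and "B \<subseteq> vertices G"
  shows "(\<exists>X. X \<subseteq> vertices G \<and> finite X \<and> card X < k \<and>
            (\<forall>R. AB_path G A B R \<longrightarrow> X \<inter> Field R \<noteq> {}))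
       \<or> (\<exists>\<P>. \<P> \<subseteq> G \<and> finite \<P> \<and> card \<P> = k \<and> (\<forall>R\<in>\<P>. AB_path G A B R) \<and>
            (\<forall>P\<in>\<P>. \<forall>Q\<in>\<P>. P \<noteq> Q \<longrightarrow> Field P \<inter> Field Q = {}))"
proof (induction k)
  case 0
  show ?case by (intro disjI2 exI[of _ "{}"]) simp
next
  case (Suc k)
  interpret menger_setting G A B by unfold_locales (rule assms(1))
  from Suc.IH show ?case
  proof (elim disjE exE conjE)
    fix X assume "X \<subseteq> vertices G" "finite X" "card X < k" "\<forall>R. AB_path G A B R \<longrightarrow> X \<inter> Field R \<noteq> {}"
    then show ?case by (blast intro: less_SucI)
  next
    fix PP assume "PP \<subseteq> G" and PP: "finite PP" "card PP = k" "\<forall>R\<in>PP. AB_path G A B R"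
      "\<forall>P\<in>PP. \<forall>Q\<in>PP. P \<noteq> Q \<longrightarrow> Field P \<inter> Field Q = {}"
    show ?case by (rule more_paths_or_separator[OF PP])
  qed
qed

end
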